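(* Let $\Phi = \{\xi = (\tau_L,\delta_L,\tau_R,\delta_R) \in \mathbb{R}^4 : \tau_L > |\delta_L + 1|,\ \tau_R < -|\delta_R+1|\}$, $\alpha(\xi) = \tau_L\tau_R + (\delta_L - 1)(\delta_R - 1)$, and $$g(\xi) = \left(\tau_R^2 - 2\delta_R,\ \delta_R^2,\ \tau_L\tau_R - \delta_L - \delta_R,\ \delta_L\delta_R\right).$$ If $\xi \in \Phi$ and $\alpha(\xi) < 0$, then $g(\xi) \in \Phi$. *)

theory Defs
  imports Complex_Main
begin

definition Phi :: "(real \<times> real \<times> real \<times> real) set" where
  "Phi = {(tL, dL, tR, dR). tL > \<bar>dL + 1\<bar> \<and> tR < - \<bar>dR + 1\<bar>}"

fun alpha :: "real \<times> real \<times> real \<times> real \<Rightarrow> real" where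
  "alpha (tL, dL, tR, dR) = tL * tR + (dL - 1) * (dR - 1)"

fun g :: "real \<times> real \<times> real \<times> real \<Rightarrow> real \<times> real \<times> real \<times> real" where
  "g (tL, dL, tR, dR) = (tR^2 - 2 * dR, dR^2, tL * tR - dL - dR, dL * dR)"

end

theory Submission
  imports Defs
begin

text \<open>The first condition of \<open>Phi\<close> for \<open>g \<xi>\<close> is
  \<open>\<tau>\<^sub>R\<^sup>2 > (\<delta>\<^sub>R + 1)\<^sup>2\<close> in disguise. For the second, \<open>\<bar>\<delta>\<^sub>L\<delta>\<^sub>R + 1\<bar> < \<delta>\<^sub>L + \<delta>\<^sub>R - \<tau>\<^sub>L\<tau>\<^sub>R\<close>
  splits into two strict inequalities: one is exactly \<open>alpha \<xi> < 0\<close>, the other is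
  \<open>\<tau>\<^sub>L\<tau>\<^sub>R < (\<delta>\<^sub>L + 1)(\<delta>\<^sub>R + 1)\<close>, which follows by multiplying the two conditions of \<open>Phi\<close>.\<close>

lemma abs_square_plus_one_less:
  fixes t d :: "'a::linordered_idom"
  assumes "\<bar>d + 1\<bar> < \<bar>t\<bar>"
  shows "\<bar>d\<^sup>2 + 1\<bar> < t\<^sup>2 - 2 * d"
proof -
  have "(d + 1)\<^sup>2 < t\<^sup>2"
    using assms by (meson abs_le_square_iff not_le)
  then show ?thesis
    by (simp add: power2_sum algebra_simps)
qed

lemma mult_less_plus_one_mult_plus_one:
  fixes tL dL tR dR :: "'a::linordered_idom"
  assumes "\<bar>dL + 1\<bar> < tL" and "tR < - \<bar>dR + 1\<bar>"
  shows "tL * tR < (dL + 1) * (dR + 1)"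
proof -
  have "\<bar>dL + 1\<bar> * \<bar>dR + 1\<bar> < tL * (- tR)"
    using assms by (intro abs_mult_less) auto
  moreover have "- ((dL + 1) * (dR + 1)) \<le> \<bar>dL + 1\<bar> * \<bar>dR + 1\<bar>"
    by (metis abs_ge_minus_self abs_mult)
  ultimately show ?thesis
    by simp
qed

lemma abs_product_plus_one_less:
  fixes tL dL tR dR :: "'a::linordered_idom"
  assumes "\<bar>dL + 1\<bar> < tL" and "tR < - \<bar>dR + 1\<bar>"
    and "tL * tR + (dL - 1) * (dR - 1) < 0"
  shows "tL * tR - dL - dR < - \<bar>dL * dR + 1\<bar>"
proof -
  have "dL * dR + 1 < dL + dR - tL * tR"
    using assms(3) by (simp add: algebra_simps)
  moreover have "- (dL * dR + 1) < dL + dR - tL * tR"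
    using mult_less_plus_one_mult_plus_one[OF assms(1,2)] by (simp add: algebra_simps)
  ultimately show ?thesis
    by (simp add: abs_less_iff)
qed

theorem proposition4p3:
  fixes \<xi> :: "real \<times> real \<times> real \<times> real"
  assumes "\<xi> \<in> Phi" and "alpha \<xi> < 0"
  shows "g \<xi> \<in> Phi"
proof -
  obtain tL dL tR dR where \<xi>: "\<xi> = (tL, dL, tR, dR)"
    by (cases \<xi>) auto
  have L: "\<bar>dL + 1\<bar> < tL" and R: "tR < - \<bar>dR + 1\<bar>"
    using assms(1) by (auto simp: \<xi> Phi_def)
  have "\<bar>dR + 1\<bar> < \<bar>tR\<bar>"
    using R by linarith
  then have "\<bar>dR\<^sup>2 + 1\<bar> < tR\<^sup>2 - 2 * dR"
    by (rule abs_square_plus_one_less)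
  moreover have "tL * tR - dL - dR < - \<bar>dL * dR + 1\<bar>"
    using abs_product_plus_one_less[OF L R] assms(2) by (simp add: \<xi>)
  ultimately show ?thesis
    by (simp add: \<xi> Phi_def)
qed

end
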